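(* Let $\alpha>0$, $A\ge0$, $B>0$, $t>0$, and let $P_n(x,t)$ be the monic polynomials orthogonal on $[0,\infty)$ w.r.t. $w(x,t)=x^\alpha e^{-x}(A+B\theta(x-t))$, with norms $h_n(t)$ and $\beta_n=h_n/h_{n-1}$. Let $R_n(t)=Bt^\alpha e^{-t}\{P_n(t,t)\}^2/h_n(t)$ and $r_n(t)=Bt^\alpha e^{-t}P_n(t,t)P_{n-1}(t,t)/h_{n-1}(t)$. Then for $n\ge1$ (whenever the right-hand side is defined) $$\beta_n=\frac{1}{1-R_n}\left[r_n(2n+\alpha)+n(n+\alpha)+\frac{r_n^2}{R_n}\right].$$
   Context: $\theta$ is the Heaviside function ($1$ for $x>0$, $0$ otherwise); $P_n(t,t)$ is $P_n(x,t)$ at $x=t$. *)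

theory Defs
  imports "HOL-Analysis.Analysis" "HOL-Computational_Algebra.Polynomial"
begin

definition heaviside :: "real \<Rightarrow> real" where
  "heaviside x = (if x > 0 then 1 else 0)"

definition jump_laguerre_weight :: "real \<Rightarrow> real \<Rightarrow> real \<Rightarrow> real \<Rightarrow> real \<Rightarrow> real" where
  "jump_laguerre_weight \<alpha> A B t x = x powr \<alpha> * exp (- x) * (A + B * heaviside (x - t))"

definition monic_orthogonal_family :: "(real \<Rightarrow> real) \<Rightarrow> (nat \<Rightarrow> real poly) \<Rightarrow> bool" where
  "monic_orthogonal_family w P \<longleftrightarrow>
     (\<forall>n. degree (P n) = n \<and> lead_coeff (P n) = 1) \<and>
     (\<forall>m n. m \<noteq> n \<longrightarrow>
        (LINT x:{0..}|lborel. poly (P m) x * poly (P n) x * w x) = 0)"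

definition op_norm :: "(real \<Rightarrow> real) \<Rightarrow> (nat \<Rightarrow> real poly) \<Rightarrow> nat \<Rightarrow> real" where
  "op_norm w P n = (LINT x:{0..}|lborel. (poly (P n) x)^2 * w x)"

end

theory Submission
  imports Defs "HOL-Real_Asymp.Real_Asymp"
begin

text \<open>
  Put L(q) = \<integral> q(x) w(x) / x dx, so that the orthogonality pairing is \<langle>a, b\<rangle> = L(x a b).
  Since (x^\<alpha> e^-x q)' = x^(\<alpha>-1) e^-x (\<alpha> q + x q' - x q) and w/x jumps by B x^(\<alpha>-1) e^-x at t,
  integration gives L(\<alpha> q + x q' - x q) = - B t^\<alpha> e^-t q(t). Applied to p^2, s^2 and p s, where
  p = P_n and s = P_(n-1), and combined with orthogonality, this expresses \<alpha> L(p^2), \<alpha> L(s^2)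
  and \<alpha> L(p s) through h_n, h_(n-1) and the values p(t), s(t). Writing p = p(0) + x p1 and
  s = s(0) + x s1, orthogonality also gives L(p^2) = p(0) L(p), L(s^2) = s(0) L(s) and
  L(p s) = s(0) L(p) = p(0) L(s) + h_(n-1), hence L(p^2) L(s^2) = L(p s) (L(p s) - h_(n-1)).
  Eliminating the three values of L leaves a relation between h_n and h_(n-1) which, divided by
  h_(n-1)^2, is the formula for \<beta>_n.
\<close>

lemma laguerre_monomial_integrable:
  fixes \<alpha> :: real
  assumes "\<alpha> > 0"
  shows "set_integrable lborel {0<..} (\<lambda>x::real. x ^ k * x powr (\<alpha> - 1) * exp (- x))"
proof -
  have "((\<lambda>x. x powr (\<alpha> + k - 1) / exp x) has_integral Gamma (\<alpha> + k)) {0..}"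
    using Gamma_integral_real[of "\<alpha> + k"] assms by simp
  then have "(\<lambda>x. x powr (\<alpha> + k - 1) / exp x) absolutely_integrable_on {0..}"
    by (intro nonnegative_absolutely_integrable_1) (auto simp: integrable_on_def)
  then have "(\<lambda>x. x powr (\<alpha> + k - 1) / exp x) absolutely_integrable_on {0<..}"
    by (rule set_integrable_subset) auto
  then have "(\<lambda>x. x ^ k * x powr (\<alpha> - 1) * exp (- x)) absolutely_integrable_on {0<..}"
  proof (rule set_integrable_cong[THEN iffD1, rotated -1])
    fix x :: real
    assume "x \<in> {0<..}"
    then show "x powr (\<alpha> + k - 1) / exp x = x ^ k * x powr (\<alpha> - 1) * exp (- x)"
      by (simp add: powr_add powr_realpow exp_minus field_simps powr_diff)
  qed auto
  then show ?thesis
    unfolding set_integrable_def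
    by (subst (asm) integrable_completion) (auto intro!: borel_measurable_continuous_on_indicator)
qed

lemma laguerre_poly_integrable:
  fixes \<alpha> a :: real
  assumes "\<alpha> > 0" and "0 \<le> a"
  shows "set_integrable lborel {a<..} (\<lambda>x. poly q x * x powr (\<alpha> - 1) * exp (- x))"
proof -
  have "integrable lborel (\<lambda>x. \<Sum>i\<le>degree q.
          coeff q i * (indicator {0<..} x *\<^sub>R (x ^ i * x powr (\<alpha> - 1) * exp (- x))))"
    using laguerre_monomial_integrable[OF assms(1)] unfolding set_integrable_def by auto
  then have "set_integrable lborel {0<..} (\<lambda>x. poly q x * x powr (\<alpha> - 1) * exp (- x))"
    unfolding set_integrable_def
    by (simp add: poly_altdef sum_distrib_left sum_distrib_right mult_ac)
  then show ?thesis
    by (rule set_integrable_subset) (use assms(2) in auto)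
qed

definition pearson_op :: "real \<Rightarrow> real poly \<Rightarrow> real poly" where
  "pearson_op \<alpha> q = smult \<alpha> q + [:0, 1:] * pderiv q - [:0, 1:] * q"

lemma has_real_derivative_laguerre_factor:
  fixes x :: real
  assumes "x > 0"
  shows "((\<lambda>x. x powr \<alpha> * exp (- x) * poly q x) has_real_derivative
           poly (pearson_op \<alpha> q) x * x powr (\<alpha> - 1) * exp (- x)) (at x)"
proof -
  have "((\<lambda>x. x powr \<alpha> * exp (- x) * poly q x) has_real_derivative
          \<alpha> * x powr (\<alpha> - 1) * exp (- x) * poly q x - x powr \<alpha> * exp (- x) * poly q x
            + x powr \<alpha> * exp (- x) * poly (pderiv q) x) (at x)"
    using assms by (auto intro!: derivative_eq_intros simp: field_simps)
  moreover have "x powr \<alpha> = x * x powr (\<alpha> - 1)"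
    using assms by (simp add: powr_diff)
  ultimately show ?thesis
    by (simp add: pearson_op_def algebra_simps)
qed

lemma laguerre_factor_tendsto_0_at_top:
  fixes \<alpha> :: real
  shows "((\<lambda>x. x powr \<alpha> * exp (- x) * poly q x) \<longlongrightarrow> 0) at_top"
proof -
  have "((\<lambda>x. \<Sum>i\<le>degree q. coeff q i * (x powr \<alpha> * exp (- x) * x ^ i))
          \<longlongrightarrow> (\<Sum>i\<le>degree q. coeff q i * 0)) at_top"
  proof (intro tendsto_sum tendsto_mult_left)
    fix i
    show "((\<lambda>x::real. x powr \<alpha> * exp (- x) * x ^ i) \<longlongrightarrow> 0) at_top"
      by real_asymp
  qed
  then show ?thesis
    by (simp add: poly_altdef sum_distrib_left mult_ac)
qed

lemma integral_pearson_op: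
  fixes \<alpha> a :: real
  assumes "\<alpha> > 0" and "0 \<le> a"
  shows "(LINT x:{a<..}|lborel. poly (pearson_op \<alpha> q) x * x powr (\<alpha> - 1) * exp (- x))
           = - (a powr \<alpha> * exp (- a) * poly q a)"
proof -
  define F where "F = (\<lambda>x. x powr \<alpha> * exp (- x) * poly q x)"
  have "continuous_on {0..} F"
    unfolding F_def using assms(1)
    by (intro continuous_intros continuous_on_powr') auto
  then have "(F \<longlongrightarrow> F a) (at a within {a..})"
    using assms(2) by (auto simp: continuous_on_def intro: tendsto_within_subset)
  then have "(F \<longlongrightarrow> F a) (at_right a)"
    by (rule tendsto_within_subset) auto
  then have "(LBINT x=ereal a..\<infinity>. poly (pearson_op \<alpha> q) x * x powr (\<alpha> - 1) * exp (- x)) = 0 - F a"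
  proof (intro interval_integral_FTC_integrable[where F = F])
    show "set_integrable lborel (einterval (ereal a) \<infinity>)
            (\<lambda>x. poly (pearson_op \<alpha> q) x * x powr (\<alpha> - 1) * exp (- x))"
      using laguerre_poly_integrable[OF assms] by (simp add: einterval_def greaterThan_def)
    show "((F \<circ> real_of_ereal) \<longlongrightarrow> 0) (at_left \<infinity>)"
      unfolding ereal_tendsto_simps F_def by (rule laguerre_factor_tendsto_0_at_top)
  qed (use assms(2) in \<open>auto simp: F_def ereal_tendsto_simps has_real_derivative_laguerre_factor
        simp flip: has_real_derivative_iff_has_vector_derivative intro!: continuous_intros\<close>)
  then show ?thesis
    by (simp add: F_def interval_lebesgue_integral_def einterval_def greaterThan_def)
qed

definition jump_laguerre_functional :: "real \<Rightarrow> real \<Rightarrow> real \<Rightarrow> real \<Rightarrow> real poly \<Rightarrow> real" where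
  "jump_laguerre_functional \<alpha> A B t q =
     A * (LINT x:{0<..}|lborel. poly q x * x powr (\<alpha> - 1) * exp (- x)) +
     B * (LINT x:{t<..}|lborel. poly q x * x powr (\<alpha> - 1) * exp (- x))"

lemma jump_laguerre_functional_add:
  assumes "\<alpha> > 0" and "0 \<le> t"
  shows "jump_laguerre_functional \<alpha> A B t (p + q)
           = jump_laguerre_functional \<alpha> A B t p + jump_laguerre_functional \<alpha> A B t q"
  using laguerre_poly_integrable[OF assms(1) order_refl] laguerre_poly_integrable[OF assms]
  by (simp add: jump_laguerre_functional_def algebra_simps)

lemma jump_laguerre_functional_smult:
  "jump_laguerre_functional \<alpha> A B t (smult c q) = c * jump_laguerre_functional \<alpha> A B t q"
  by (simp add: jump_laguerre_functional_def algebra_simps)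

lemma jump_laguerre_functional_pearson_op:
  assumes "\<alpha> > 0" and "0 \<le> t"
  shows "jump_laguerre_functional \<alpha> A B t (pearson_op \<alpha> q) = - (B * t powr \<alpha> * exp (- t) * poly q t)"
  using integral_pearson_op[OF assms(1) order_refl] integral_pearson_op[OF assms]
  by (simp add: jump_laguerre_functional_def)

lemma indicator_mult_jump_laguerre_weight:
  fixes \<alpha> t x :: real and q :: "real poly"
  assumes "0 \<le> t"
  defines "f \<equiv> poly ([:0, 1:] * q) x * x powr (\<alpha> - 1) * exp (- x)"
  shows "indicator {0..} x * (poly q x * jump_laguerre_weight \<alpha> A B t x)
           = A * (indicator {0<..} x * f) + B * (indicator {t<..} x * f)"
proof (cases "x > 0")
  case True
  then have "x powr \<alpha> = x * x powr (\<alpha> - 1)"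
    by (simp add: powr_diff)
  then show ?thesis
    using True by (auto simp: f_def jump_laguerre_weight_def heaviside_def indicator_def algebra_simps)
next
  case False
  then show ?thesis
    using assms by (auto simp: jump_laguerre_weight_def heaviside_def indicator_def)
qed

lemma jump_laguerre_weight_integrable:
  assumes "\<alpha> > 0" and "0 \<le> t"
  shows "set_integrable lborel {0..} (\<lambda>x. poly q x * jump_laguerre_weight \<alpha> A B t x)"
  using laguerre_poly_integrable[OF assms(1) order_refl, of "[:0, 1:] * q"]
    laguerre_poly_integrable[OF assms, of "[:0, 1:] * q"]
  unfolding set_integrable_def by (simp add: indicator_mult_jump_laguerre_weight[OF assms(2)])

lemma integral_jump_laguerre_weight:
  assumes "\<alpha> > 0" and "0 \<le> t"
  shows "(LINT x:{0..}|lborel. poly q x * jump_laguerre_weight \<alpha> A B t x)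
           = jump_laguerre_functional \<alpha> A B t ([:0, 1:] * q)"
  using laguerre_poly_integrable[OF assms(1) order_refl, of "[:0, 1:] * q"]
    laguerre_poly_integrable[OF assms, of "[:0, 1:] * q"]
  unfolding set_integrable_def set_lebesgue_integral_def jump_laguerre_functional_def
  by (simp add: indicator_mult_jump_laguerre_weight[OF assms(2)])

lemma degree_diff_smult_monic_less:
  fixes p q :: "'a::comm_ring_1 poly"
  assumes "degree q \<le> degree p" and "lead_coeff p = 1"
  defines "r \<equiv> q - smult (coeff q (degree p)) p"
  shows "r = 0 \<or> degree r < degree p"
proof -
  have "degree r \<le> degree p"
    unfolding r_def using assms(1) degree_smult_le by (intro degree_diff_le) auto
  moreover have "coeff r (degree p) = 0"
    using assms(2) by (simp add: r_def)
  ultimately show ?thesis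
    by (metis le_neq_implies_less leading_coeff_0_iff)
qed

locale pearson_functional =
  fixes L :: "real poly \<Rightarrow> real" and \<alpha> W t :: real
  assumes L_add: "L (p + q) = L p + L q"
    and L_smult: "L (smult c q) = c * L q"
    and L_pearson_op: "L (pearson_op \<alpha> q) = - (W * poly q t)"
begin

lemma L_diff: "L (p - q) = L p - L q"
  using L_add[of p "smult (- 1) q"] L_smult[of "- 1" q] by simp

definition ip :: "real poly \<Rightarrow> real poly \<Rightarrow> real" where
  "ip a b = L ([:0, 1:] * a * b)"

lemma ip_commute: "ip a b = ip b a"
  by (simp add: ip_def mult_ac)

lemma ip_0_right [simp]: "ip a 0 = 0"
  using L_smult[of 0 0] by (simp add: ip_def)

lemma ip_add_right: "ip a (b + c) = ip a b + ip a c"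
  unfolding ip_def by (metis L_add distrib_left)

lemma ip_smult_right: "ip a (smult c b) = c * ip a b"
  unfolding ip_def by (metis L_smult mult_smult_right)

lemma ip_diff_right: "ip a (b - c) = ip a b - ip a c"
  unfolding ip_def by (metis L_diff right_diff_distrib)

lemma L_mult_pCons: "L (a * pCons c d) = c * L a + ip a d"
proof -
  have "a * pCons c d = smult c a + [:0, 1:] * a * d"
    by (simp add: mult_pCons_right mult_ac)
  then show ?thesis
    by (simp add: L_add L_smult ip_def)
qed

lemma L_pearson_op_mult:
  "\<alpha> * L (a * b) + ip (pderiv a) b + ip a (pderiv b) - ip a b = - (W * poly a t * poly b t)"
proof -
  have "pearson_op \<alpha> (a * b) = smult \<alpha> (a * b) + [:0, 1:] * pderiv a * b
          + [:0, 1:] * a * pderiv b - [:0, 1:] * a * b"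
    by (simp add: pearson_op_def pderiv_mult algebra_simps)
  then have "L (pearson_op \<alpha> (a * b)) = \<alpha> * L (a * b) + ip (pderiv a) b + ip a (pderiv b) - ip a b"
    by (simp only: L_add L_diff L_smult ip_def)
  then show ?thesis
    by (simp add: L_pearson_op)
qed

end

locale pearson_orthogonal_family = pearson_functional +
  fixes P :: "nat \<Rightarrow> real poly"
  assumes degree_P: "degree (P n) = n"
    and lead_coeff_P: "lead_coeff (P n) = 1"
    and ip_P_P: "m \<noteq> n \<Longrightarrow> ip (P m) (P n) = 0"
begin

lemma coeff_P_self: "coeff (P n) n = 1"
  using lead_coeff_P degree_P by metis

lemma ip_P_lower_degree:
  assumes "q = 0 \<or> degree q < n"
  shows "ip (P n) q = 0"
  using assms
proof (induction "degree q" arbitrary: q rule: less_induct)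
  case less
  show ?case
  proof (cases "q = 0")
    case False
    define r where "r = q - smult (lead_coeff q) (P (degree q))"
    have "r = 0 \<or> degree r < degree q"
      using degree_diff_smult_monic_less[of q "P (degree q)"] unfolding r_def
      by (simp add: degree_P coeff_P_self)
    then have "ip (P n) r = 0"
      using less.hyps less.prems by force
    moreover have "ip (P n) (P (degree q)) = 0"
      using ip_P_P less.prems False by auto
    moreover have "q = r + smult (lead_coeff q) (P (degree q))"
      by (simp add: r_def)
    ultimately show ?thesis
      by (metis ip_add_right ip_smult_right add_0 mult_zero_right)
  qed simp
qed

lemma ip_P_eq_coeff:
  assumes "degree q \<le> m"
  shows "ip (P m) q = coeff q m * ip (P m) (P m)"
proof -
  define r where "r = q - smult (coeff q m) (P m)"
  have "r = 0 \<or> degree r < m"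
    using degree_diff_smult_monic_less[of q "P m"] assms unfolding r_def
    by (simp add: degree_P coeff_P_self)
  then have "ip (P m) r = 0"
    by (rule ip_P_lower_degree)
  then show ?thesis
    by (simp add: r_def ip_diff_right ip_smult_right)
qed

lemma L_P_product_relation:
  "L (P (Suc m) * P (Suc m)) * L (P m * P m)
     = L (P (Suc m) * P m) * (L (P (Suc m) * P m) - ip (P m) (P m))"
proof -
  obtain p0 d where p: "P (Suc m) = pCons p0 d"
    by (rule pCons_cases)
  obtain s0 e where s: "P m = pCons s0 e"
    by (rule pCons_cases)
  have "degree (P (Suc m)) = Suc m" "degree (P m) = m"
    by (rule degree_P)+
  then have "degree d \<le> m" "degree e \<le> m"
    by (auto simp: p s degree_pCons_eq_if split: if_splits)
  have "coeff (P (Suc m)) (Suc m) = 1" "coeff (P (Suc m)) (Suc (Suc m)) = 0"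
      "coeff (P m) (Suc m) = 0" "coeff (P m) (Suc (Suc m)) = 0"
    by (simp_all add: coeff_P_self coeff_eq_0 degree_P)
  then have "coeff d m = 1" "coeff d (Suc m) = 0" "coeff e m = 0" "coeff e (Suc m) = 0"
    by (simp_all only: p s coeff_pCons_Suc)
  have "ip (P (Suc m)) d = 0" "ip (P (Suc m)) e = 0" "ip (P m) d = ip (P m) (P m)" "ip (P m) e = 0"
    using ip_P_eq_coeff[of d "Suc m"] ip_P_eq_coeff[of e "Suc m"] ip_P_eq_coeff[of d m]
      ip_P_eq_coeff[of e m] \<open>degree d \<le> m\<close> \<open>degree e \<le> m\<close> \<open>coeff d m = 1\<close>
      \<open>coeff d (Suc m) = 0\<close> \<open>coeff e m = 0\<close> \<open>coeff e (Suc m) = 0\<close>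
    by simp_all
  then have pp: "L (P (Suc m) * P (Suc m)) = p0 * L (P (Suc m))"
    and ps: "L (P (Suc m) * P m) = s0 * L (P (Suc m))"
    and sp: "L (P m * P (Suc m)) = p0 * L (P m) + ip (P m) (P m)"
    and ss: "L (P m * P m) = s0 * L (P m)"
    using L_mult_pCons[of "P (Suc m)" p0 d] L_mult_pCons[of "P (Suc m)" s0 e]
      L_mult_pCons[of "P m" p0 d] L_mult_pCons[of "P m" s0 e]
    unfolding p [symmetric] s [symmetric] by simp_all
  have "L (P (Suc m) * P m) - ip (P m) (P m) = p0 * L (P m)"
    using sp by (simp add: mult.commute)
  then show ?thesis
    by (simp add: pp ps ss)
qed

lemma P_pearson_relations:
  "\<alpha> * L (P (Suc m) * P (Suc m)) - ip (P (Suc m)) (P (Suc m)) = - (W * poly (P (Suc m)) t ^ 2)"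
  "\<alpha> * L (P m * P m) - ip (P m) (P m) = - (W * poly (P m) t ^ 2)"
  "\<alpha> * L (P (Suc m) * P m) + Suc m * ip (P m) (P m) = - (W * poly (P (Suc m)) t * poly (P m) t)"
proof -
  have degree_pderiv_P: "degree (pderiv (P k)) = k - 1" for k
    by (simp add: degree_pderiv degree_P)
  have coeff_pderiv_P: "coeff (pderiv (P k)) j = Suc j * coeff (P k) (Suc j)" for k j
    by (simp add: coeff_pderiv)
  have "ip (P (Suc m)) (pderiv (P (Suc m))) = 0"
    using ip_P_eq_coeff[of "pderiv (P (Suc m))" "Suc m"]
    by (simp add: degree_pderiv_P coeff_pderiv_P coeff_eq_0 degree_P)
  moreover have "ip (P m) (pderiv (P m)) = 0"
    using ip_P_eq_coeff[of "pderiv (P m)" m]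
    by (simp add: degree_pderiv_P coeff_pderiv_P coeff_eq_0 degree_P)
  moreover have "ip (P m) (pderiv (P (Suc m))) = Suc m * ip (P m) (P m)"
    using ip_P_eq_coeff[of "pderiv (P (Suc m))" m]
    by (simp add: degree_pderiv_P coeff_pderiv_P coeff_P_self)
  moreover have "ip (P (Suc m)) (pderiv (P m)) = 0"
    using ip_P_eq_coeff[of "pderiv (P m)" "Suc m"]
    by (simp add: degree_pderiv_P coeff_pderiv_P coeff_eq_0 degree_P)
  moreover have "ip (P (Suc m)) (P m) = 0"
    by (simp add: ip_P_P)
  ultimately show
    "\<alpha> * L (P (Suc m) * P (Suc m)) - ip (P (Suc m)) (P (Suc m)) = - (W * poly (P (Suc m)) t ^ 2)"
    "\<alpha> * L (P m * P m) - ip (P m) (P m) = - (W * poly (P m) t ^ 2)"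
    "\<alpha> * L (P (Suc m) * P m) + Suc m * ip (P m) (P m) = - (W * poly (P (Suc m)) t * poly (P m) t)"
    using L_pearson_op_mult[of "P (Suc m)" "P (Suc m)"] L_pearson_op_mult[of "P m" "P m"]
      L_pearson_op_mult[of "P (Suc m)" "P m"]
    by (simp_all add: ip_commute[of "pderiv _"] power2_eq_square)
qed

lemma norm_identity:
  fixes m :: nat and h g u v :: real
  defines "h \<equiv> ip (P (Suc m)) (P (Suc m))" and "g \<equiv> ip (P m) (P m)"
    and "u \<equiv> poly (P (Suc m)) t" and "v \<equiv> poly (P m) t"
  shows "(h - W * u ^ 2) * (g - W * v ^ 2) = (Suc m * g + W * u * v) * (Suc m * g + W * u * v + \<alpha> * g)"
proof -
  have pp: "h - W * u ^ 2 = \<alpha> * L (P (Suc m) * P (Suc m))"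
    and ss: "g - W * v ^ 2 = \<alpha> * L (P m * P m)"
    and ps: "\<alpha> * L (P (Suc m) * P m) = - (Suc m * g + W * u * v)"
    using P_pearson_relations[of m] unfolding h_def g_def u_def v_def by linarith+
  have "(h - W * u ^ 2) * (g - W * v ^ 2) = \<alpha> * \<alpha> * (L (P (Suc m) * P (Suc m)) * L (P m * P m))"
    by (simp add: pp ss mult_ac)
  also have "\<dots> = \<alpha> * \<alpha> * (L (P (Suc m) * P m) * (L (P (Suc m) * P m) - g))"
    by (simp only: L_P_product_relation g_def)
  also have "\<dots> = (\<alpha> * L (P (Suc m) * P m)) * (\<alpha> * L (P (Suc m) * P m) - \<alpha> * g)"
    by (simp add: algebra_simps)
  finally show ?thesis
    unfolding ps by (simp add: algebra_simps)
qed

lemma ip_P_shift: "ip (P (Suc m)) ([:0, 1:] * P m) = ip (P (Suc m)) (P (Suc m))"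
proof -
  have "degree ([:0, 1:] * P m) \<le> Suc m"
    by (simp add: degree_P)
  then show ?thesis
    using ip_P_eq_coeff[of "[:0, 1:] * P m" "Suc m"] by (simp add: coeff_P_self)
qed

end

lemma set_integral_mult_eq_0_if_square_eq_0:
  fixes f g w :: "'a \<Rightarrow> real"
  assumes "\<And>x. x \<in> S \<Longrightarrow> 0 \<le> w x"
    and "set_integrable M S (\<lambda>x. f x ^ 2 * w x)"
    and "(LINT x:S|M. f x ^ 2 * w x) = 0"
  shows "(LINT x:S|M. f x * g x * w x) = 0"
proof -
  have "AE x in M. indicator S x * (f x ^ 2 * w x) = 0"
    using assms integral_nonneg_eq_0_iff_AE[of M "\<lambda>x. indicator S x * (f x ^ 2 * w x)"]
    unfolding set_integrable_def set_lebesgue_integral_def by (auto simp: indicator_def)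
  then have "AE x in M. indicator S x * (f x * g x * w x) = 0"
    by eventually_elim (auto simp: indicator_def split: if_splits)
  then show ?thesis
    unfolding set_lebesgue_integral_def by (simp add: integral_eq_zero_AE)
qed

lemma pearson_functional_jump_laguerre:
  fixes \<alpha> A B t :: real
  assumes "\<alpha> > 0" and "0 \<le> t"
  shows "pearson_functional (jump_laguerre_functional \<alpha> A B t) \<alpha> (B * t powr \<alpha> * exp (- t)) t"
  by unfold_locales
    (simp_all add: assms jump_laguerre_functional_add jump_laguerre_functional_smult
      jump_laguerre_functional_pearson_op)

lemma ip_jump_laguerre_functional:
  fixes \<alpha> A B t :: real
  assumes "\<alpha> > 0" and "0 \<le> t"
  shows "pearson_functional.ip (jump_laguerre_functional \<alpha> A B t) a b
           = (LINT x:{0..}|lborel. poly a x * poly b x * jump_laguerre_weight \<alpha> A B t x)"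
  using integral_jump_laguerre_weight[OF assms, of "a * b"]
  by (simp add: pearson_functional.ip_def[OF pearson_functional_jump_laguerre[OF assms]] mult.assoc)

lemma pearson_orthogonal_family_jump_laguerre:
  fixes \<alpha> A B t :: real
  assumes "\<alpha> > 0" and "0 \<le> t"
    and "monic_orthogonal_family (jump_laguerre_weight \<alpha> A B t) P"
  shows "pearson_orthogonal_family (jump_laguerre_functional \<alpha> A B t) \<alpha> (B * t powr \<alpha> * exp (- t)) t P"
proof (rule pearson_orthogonal_family.intro[OF pearson_functional_jump_laguerre[OF assms(1,2)]])
  show "pearson_orthogonal_family_axioms (jump_laguerre_functional \<alpha> A B t) P"
    using assms(3) unfolding monic_orthogonal_family_def
    by unfold_locales (simp_all add: ip_jump_laguerre_functional[OF assms(1,2)], metis)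
qed

lemma op_norm_jump_laguerre:
  fixes \<alpha> A B t :: real
  assumes "\<alpha> > 0" and "0 \<le> t"
  shows "op_norm (jump_laguerre_weight \<alpha> A B t) P n
           = pearson_functional.ip (jump_laguerre_functional \<alpha> A B t) (P n) (P n)"
  by (simp add: op_norm_def ip_jump_laguerre_functional[OF assms] power2_eq_square)

lemma op_norm_jump_laguerre_neq_0:
  fixes \<alpha> A B t :: real
  assumes "\<alpha> > 0" and "A \<ge> 0" and "B \<ge> 0" and "0 \<le> t"
    and "monic_orthogonal_family (jump_laguerre_weight \<alpha> A B t) P"
    and "op_norm (jump_laguerre_weight \<alpha> A B t) P (Suc m) \<noteq> 0"
  shows "op_norm (jump_laguerre_weight \<alpha> A B t) P m \<noteq> 0"
proof
  let ?w = "jump_laguerre_weight \<alpha> A B t"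
  interpret pearson_orthogonal_family "jump_laguerre_functional \<alpha> A B t" \<alpha> "B * t powr \<alpha> * exp (- t)" t P
    using pearson_orthogonal_family_jump_laguerre assms(1,4,5) .
  assume "op_norm ?w P m = 0"
  then have "(LINT x:{0..}|lborel. poly (P m) x ^ 2 * ?w x) = 0"
    by (simp add: op_norm_def)
  moreover have "set_integrable lborel {0..} (\<lambda>x. poly (P m) x ^ 2 * ?w x)"
    using jump_laguerre_weight_integrable[OF assms(1,4), of "P m * P m"]
    by (simp add: power2_eq_square mult.assoc)
  moreover have "0 \<le> ?w x" if "x \<in> {0..}" for x
    using assms(2,3) by (simp add: jump_laguerre_weight_def heaviside_def)
  ultimately have "(LINT x:{0..}|lborel. poly (P m) x * (x * poly (P (Suc m)) x) * ?w x) = 0"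
    by (intro set_integral_mult_eq_0_if_square_eq_0)
  then have "ip (P (Suc m)) ([:0, 1:] * P m) = 0"
    by (simp add: ip_jump_laguerre_functional[OF assms(1,4)] mult_ac)
  then show False
    using assms(6) ip_P_shift[of m] by (simp add: op_norm_jump_laguerre[OF assms(1,4)])
qed

lemma recurrence_coefficient_from_norm_identity:
  fixes H G W u v \<alpha> n R r :: real
  defines "R \<equiv> W * u ^ 2 / H" and "r \<equiv> W * u * v / G"
  assumes "G \<noteq> 0" and "R \<noteq> 0" and "R \<noteq> 1"
    and "(H - W * u ^ 2) * (G - W * v ^ 2) = (n * G + W * u * v) * (n * G + W * u * v + \<alpha> * G)"
  shows "H / G = 1 / (1 - R) * (r * (2 * n + \<alpha>) + n * (n + \<alpha>) + r ^ 2 / R)"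
proof -
  have "H \<noteq> 0" "W \<noteq> 0" "u \<noteq> 0"
    using \<open>R \<noteq> 0\<close> by (auto simp: R_def)
  have expanded: "G * H - G * W * u ^ 2 = W * u * v * G * (2 * n + \<alpha>) + n * (n + \<alpha>) * G ^ 2 + W * v ^ 2 * H"
    using assms(6) by (simp add: algebra_simps power2_eq_square)
  have "H / G * (1 - R) = (G * H - G * W * u ^ 2) / G ^ 2"
    using \<open>H \<noteq> 0\<close> \<open>G \<noteq> 0\<close> by (simp add: R_def field_simps power2_eq_square)
  also have "\<dots> = (W * u * v * G * (2 * n + \<alpha>) + n * (n + \<alpha>) * G ^ 2 + W * v ^ 2 * H) / G ^ 2"
    by (simp only: expanded)
  also have "\<dots> = r * (2 * n + \<alpha>) + n * (n + \<alpha>) + r ^ 2 / R"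
    using \<open>H \<noteq> 0\<close> \<open>G \<noteq> 0\<close> \<open>W \<noteq> 0\<close> \<open>u \<noteq> 0\<close>
    by (simp add: R_def r_def field_simps power2_eq_square)
  finally show ?thesis
    using \<open>R \<noteq> 1\<close> by (simp add: field_simps)
qed

theorem lemma8:
  fixes \<alpha> A B t :: real and P :: "nat \<Rightarrow> real poly" and n :: nat
    and h :: "nat \<Rightarrow> real" and \<beta> R r :: real
  assumes "\<alpha> > 0" and "A \<ge> 0" and "B > 0" and "t > 0"
    and "monic_orthogonal_family (jump_laguerre_weight \<alpha> A B t) P"
    and "n \<ge> 1"
  defines "h \<equiv> op_norm (jump_laguerre_weight \<alpha> A B t) P"
    and "\<beta> \<equiv> h n / h (n - 1)"
    and "R \<equiv> B * t powr \<alpha> * exp (- t) * (poly (P n) t)^2 / h n"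
    and "r \<equiv> B * t powr \<alpha> * exp (- t) * poly (P n) t * poly (P (n - 1)) t / h (n - 1)"
  assumes "R \<noteq> 0" and "R \<noteq> 1"
  shows "\<beta> = 1 / (1 - R) * (r * (2 * real n + \<alpha>) + real n * (real n + \<alpha>) + r^2 / R)"
proof -
  obtain m where n: "n = Suc m"
    using \<open>n \<ge> 1\<close> by (cases n) auto
  interpret pearson_orthogonal_family "jump_laguerre_functional \<alpha> A B t" \<alpha> "B * t powr \<alpha> * exp (- t)" t P
    using pearson_orthogonal_family_jump_laguerre assms(1,4,5) by simp
  have h: "h k = ip (P k) (P k)" for k
    using assms(1,4) by (simp add: h_def op_norm_jump_laguerre)
  have "h (Suc m) \<noteq> 0"
    using \<open>R \<noteq> 0\<close> by (auto simp: R_def n)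
  then have "h m \<noteq> 0"
    using op_norm_jump_laguerre_neq_0[of \<alpha> A B t P m] assms(1-5) by (simp add: h_def)
  then show ?thesis
    using recurrence_coefficient_from_norm_identity[OF _ _ _ norm_identity[of m]] assms(11,12)
    by (simp add: \<beta>_def R_def r_def n h)
qed

end
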